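(* Let $N\ge 2$ be an integer and let $\Delta_N=\{p=(p_1,\dots,p_N)\in[0,1]^N:\ \sum_{i=1}^N p_i=1\}$. For $p\in\Delta_N$ define the normalized Shannon entropy $$H(p)=\frac{1}{\log N}\Big(-\sum_{i=1}^N p_i\log p_i\Big)\quad(\text{with }0\log 0=0),$$ the total variation distance to the uniform distribution $TV(p,q)=\frac12\sum_{i=1}^N\big|p_i-\frac1N\big|$ with $q=(1/N,\dots,1/N)$, and the statistical complexity $$C_{TV}(p)=H(p)\,TV(p,q)^2=-\frac{1}{4\log N}\Big(\sum_{i=1}^N p_i\log p_i\Big)\Big(\sum_{i=1}^N\Big|p_i-\frac1N\Big|\Big)^2.$$ Then the maximum of $C_{TV}$ over $\Delta_N$ is achieved on a distribution which, up to a permutation of the coordinates, belongs to the family $$p_i=\frac{1-p_{\max}}{K}\ \ (i=1,\dots,K),\qquad p_i=\frac{p_{\max}}{N-K}\ \ (i=K+1,\dots,N),$$ for some integer $K\in\{1,\dots,N-1\}$ and some constant $p_{\max}\in[0,1]$. *)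

theory Defs
  imports Complex_Main "HOL-Combinatorics.Permutations"
begin

definition simplex :: "nat \<Rightarrow> (nat \<Rightarrow> real) set" where
  "simplex N = {p. (\<forall>i\<in>{1..N}. 0 \<le> p i \<and> p i \<le> 1) \<and> (\<Sum>i=1..N. p i) = 1}"

definition xlogx :: "real \<Rightarrow> real" where
  "xlogx x = (if x = 0 then 0 else x * ln x)"

definition norm_entropy :: "nat \<Rightarrow> (nat \<Rightarrow> real) \<Rightarrow> real" where
  "norm_entropy N p = (1 / ln (real N)) * (- (\<Sum>i=1..N. xlogx (p i)))"

definition tv_uniform :: "nat \<Rightarrow> (nat \<Rightarrow> real) \<Rightarrow> real" where
  "tv_uniform N p = (1/2) * (\<Sum>i=1..N. \<bar>p i - 1 / real N\<bar>)"

definition C_TV :: "nat \<Rightarrow> (nat \<Rightarrow> real) \<Rightarrow> real" where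
  "C_TV N p = norm_entropy N p * (tv_uniform N p)^2"

end

theory Submission
  imports Defs "HOL-Analysis.Elementary_Topology" "HOL-Real_Asymp.Real_Asymp"
begin

text \<open>
  Split the coordinates of \<open>q\<close> into the block \<open>B\<close> of those below \<open>1/N\<close> and the block of
  those at or above \<open>1/N\<close>, and replace every coordinate by the mean of its block. On each
  block the deviations \<open>q\<^sub>i - 1/N\<close> have a constant sign, so the total variation to the
  uniform distribution does not change, while by convexity of \<open>x log x\<close> the entropy can only
  grow. Hence \<open>C_TV\<close> is bounded by its values on the two-block family, which is a finite union
  of continuous images of \<open>[0,1]\<close> and therefore contains a maximiser.
\<close>

lemma tendsto_xlogx_at_right_0: "(xlogx \<longlongrightarrow> 0) (at_right 0)"
proof -
  have "((\<lambda>x::real. x * ln x) \<longlongrightarrow> 0) (at_right 0)" by real_asymp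
  moreover have "eventually (\<lambda>x. x * ln x = xlogx x) (at_right 0)"
    by (simp add: eventually_at_right_less eventually_mono xlogx_def)
  ultimately show ?thesis by (rule Lim_transform_eventually)
qed

lemma continuous_on_xlogx: "continuous_on {0..} xlogx"
  unfolding continuous_on_def
proof
  fix x :: real assume "x \<in> {0..}"
  then consider "x = 0" | "x > 0" by fastforce
  then show "(xlogx \<longlongrightarrow> xlogx x) (at x within {0..})"
  proof cases
    case 1
    then show ?thesis
      using tendsto_xlogx_at_right_0 by (simp add: at_within_Ici_at_right xlogx_def)
  next
    case 2
    have "isCont (\<lambda>x. x * ln x) x" using 2 by (intro continuous_intros) auto
    moreover have "eventually (\<lambda>y. y * ln y = xlogx y) (nhds x)"
      using eventually_nhds_in_open[of "{0<..}" x] 2 by (auto elim: eventually_mono simp: xlogx_def)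
    ultimately have "isCont xlogx x" by (rule isCont_cong[THEN iffD1, rotated])
    then show ?thesis by (auto simp: isCont_def intro: tendsto_within_subset)
  qed
qed

lemma continuous_on_xlogx_comp [continuous_intros]:
  assumes "continuous_on S f" "\<And>x. x \<in> S \<Longrightarrow> 0 \<le> f x"
  shows "continuous_on S (\<lambda>x. xlogx (f x))"
  using continuous_on_compose2[OF continuous_on_xlogx assms(1)] assms(2) by auto

lemma xlogx_ge_tangent:
  assumes "0 \<le> x" "0 < m"
  shows "xlogx m + (ln m + 1) * (x - m) \<le> xlogx x"
proof (cases "x = 0")
  case True
  then show ?thesis using assms by (simp add: xlogx_def algebra_simps)
next
  case False
  then have "x > 0" using assms by auto
  have "ln (m / x) \<le> m / x - 1" using \<open>x > 0\<close> assms by (intro ln_le_minus_one) simp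
  then have "x * (ln m - ln x) \<le> x * (m / x - 1)"
    using \<open>x > 0\<close> assms by (intro mult_left_mono) (auto simp: ln_div)
  also have "\<dots> = m - x" using \<open>x > 0\<close> by (simp add: field_simps)
  finally show ?thesis using \<open>x > 0\<close> assms by (simp add: xlogx_def algebra_simps)
qed

lemma card_mult_xlogx_mean_le_sum:
  assumes "finite S" "\<And>i. i \<in> S \<Longrightarrow> 0 \<le> q i"
  shows "real (card S) * xlogx (sum q S / real (card S)) \<le> (\<Sum>i\<in>S. xlogx (q i))"
proof (cases "S = {}")
  case False
  define m where "m = sum q S / real (card S)"
  have sum_eq: "sum q S = real (card S) * m"
    using False assms(1) by (simp add: m_def card_gt_0_iff)
  have "0 \<le> m" unfolding m_def using assms by (intro divide_nonneg_nonneg sum_nonneg) auto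
  then consider "m = 0" | "m > 0" by fastforce
  then show ?thesis
  proof cases
    case 1
    then have "\<forall>i\<in>S. q i = 0"
      using sum_eq by (simp add: sum_nonneg_eq_0_iff[OF assms])
    then show ?thesis using 1 by (simp add: m_def[symmetric] xlogx_def)
  next
    case 2
    have "(\<Sum>i\<in>S. xlogx m + (ln m + 1) * (q i - m)) \<le> (\<Sum>i\<in>S. xlogx (q i))"
      using xlogx_ge_tangent[OF assms(2) 2] by (intro sum_mono) auto
    moreover have "(\<Sum>i\<in>S. xlogx m + (ln m + 1) * (q i - m)) = real (card S) * xlogx m"
      by (simp add: sum.distrib sum_distrib_left[symmetric] sum_subtractf sum_eq)
    ultimately show ?thesis by (simp add: m_def)
  qed
qed simp

lemma sum_abs_diff_same_sign:
  fixes q :: "'a \<Rightarrow> real"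
  assumes "finite S" "(\<forall>i\<in>S. q i \<le> c) \<or> (\<forall>i\<in>S. c \<le> q i)"
  shows "(\<Sum>i\<in>S. \<bar>q i - c\<bar>) = real (card S) * \<bar>sum q S / real (card S) - c\<bar>"
proof (cases "S = {}")
  case False
  have "(\<Sum>i\<in>S. \<bar>q i - c\<bar>) = \<bar>\<Sum>i\<in>S. q i - c\<bar>"
    using assms(2)
  proof (elim disjE)
    assume "\<forall>i\<in>S. q i \<le> c"
    then have "(\<Sum>i\<in>S. \<bar>q i - c\<bar>) = (\<Sum>i\<in>S. c - q i)" "(\<Sum>i\<in>S. q i - c) \<le> 0"
      by (auto intro: sum.cong sum_nonpos)
    then show ?thesis by (simp add: sum_subtractf)
  next
    assume "\<forall>i\<in>S. c \<le> q i"
    then have "(\<Sum>i\<in>S. \<bar>q i - c\<bar>) = (\<Sum>i\<in>S. q i - c)" "(\<Sum>i\<in>S. q i - c) \<ge> 0"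
      by (auto intro: sum.cong sum_nonneg)
    then show ?thesis by simp
  qed
  also have "\<dots> = real (card S) * \<bar>sum q S / real (card S) - c\<bar>"
    using False assms(1) by (simp add: sum_subtractf card_gt_0_iff abs_mult[symmetric] field_simps)
  finally show ?thesis .
qed simp

definition two_block :: "nat \<Rightarrow> nat \<Rightarrow> real \<Rightarrow> nat \<Rightarrow> real" where
  "two_block N K t i = (if i \<le> K then (1 - t) / real K else t / real (N - K))"

lemma sum_two_block:
  assumes "K \<le> N"
  shows "(\<Sum>i=1..N. g (two_block N K t i))
    = real K * g ((1 - t) / real K) + real (N - K) * g (t / real (N - K))"
proof -
  have "{1..N} = {1..K} \<union> {K+1..N}" using assms by auto
  then have "(\<Sum>i=1..N. g (two_block N K t i))
      = (\<Sum>i=1..K. g (two_block N K t i)) + (\<Sum>i=K+1..N. g (two_block N K t i))"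
    by (simp add: sum.union_disjoint)
  then show ?thesis using assms by (simp add: two_block_def)
qed

lemma two_block_in_simplex:
  assumes "1 \<le> K" "K < N" "0 \<le> t" "t \<le> 1"
  shows "two_block N K t \<in> simplex N"
proof -
  have "(1 - t) / real K \<le> 1" "t / real (N - K) \<le> 1"
    using assms by (simp_all add: divide_le_eq)
  then have "\<forall>i\<in>{1..N}. 0 \<le> two_block N K t i \<and> two_block N K t i \<le> 1"
    using assms by (simp add: two_block_def)
  moreover have "(\<Sum>i=1..N. two_block N K t i) = 1"
    using sum_two_block[of K N "\<lambda>x. x" t] assms by simp
  ultimately show ?thesis by (simp add: simplex_def)
qed

lemma continuous_on_C_TV_two_block: "continuous_on {0..1} (\<lambda>t. C_TV N (two_block N K t))"
proof -
  have [continuous_intros]: "continuous_on S (\<lambda>t. two_block N K t i)" for S i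
    by (cases "i \<le> K") (auto simp: two_block_def divide_inverse intro!: continuous_intros)
  show ?thesis
    unfolding C_TV_def norm_entropy_def tv_uniform_def
    by (intro continuous_intros) (simp add: two_block_def)
qed

text \<open>Averaging \<open>q\<close> over \<open>B\<close> and over its complement gives \<open>two_block N (card B) t\<close>,
  with \<open>t\<close> the mass of the complement, up to a reordering of the coordinates; the
  averaged vector is never formed, only its block sums are compared.\<close>

lemma sum_two_block_block_means:
  assumes "B \<subseteq> {1..N}" "(\<Sum>i=1..N. q i) = 1"
  defines "A \<equiv> {1..N} - B"
  shows "(\<Sum>i=1..N. g (two_block N (card B) (sum q A) i))
    = real (card B) * g (sum q B / real (card B)) + real (card A) * g (sum q A / real (card A))"
proof -
  have "finite B" using assms(1) finite_subset by blast
  then have "card A = N - card B" using assms(1) by (simp add: A_def card_Diff_subset)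
  moreover have "sum q B = 1 - sum q A"
    using assms(2) sum.subset_diff[OF assms(1), of q] by (simp add: A_def)
  moreover have "card B \<le> N" using card_mono[OF _ assms(1)] by simp
  ultimately show ?thesis using sum_two_block[of "card B" N g "sum q A"] by simp
qed

lemma
  assumes "q \<in> simplex N" "B \<subseteq> {1..N}"
    and below: "\<forall>i\<in>B. q i \<le> 1 / real N" and above: "\<forall>i\<in>{1..N} - B. 1 / real N \<le> q i"
  defines "p \<equiv> two_block N (card B) (sum q ({1..N} - B))"
  shows tv_uniform_two_block_block_means: "tv_uniform N q = tv_uniform N p"
    and sum_xlogx_two_block_block_means: "(\<Sum>i=1..N. xlogx (p i)) \<le> (\<Sum>i=1..N. xlogx (q i))"
proof -
  define A where "A = {1..N} - B"
  have fin: "finite A" "finite B" using assms(2) finite_subset by (auto simp: A_def)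
  have split: "(\<Sum>i=1..N. g i) = sum g B + sum g A" for g :: "nat \<Rightarrow> real"
    using sum.subset_diff[OF assms(2), of g] by (simp add: A_def add.commute)
  have sum_q: "(\<Sum>i=1..N. q i) = 1" and q_nonneg: "\<And>i. i \<in> {1..N} \<Longrightarrow> 0 \<le> q i"
    using assms(1) by (auto simp: simplex_def)
  have block_sums: "(\<Sum>i=1..N. g (p i))
      = real (card B) * g (sum q B / real (card B)) + real (card A) * g (sum q A / real (card A))" for g
    unfolding p_def A_def using sum_two_block_block_means[OF assms(2) sum_q] .
  have tv_B: "(\<Sum>i\<in>B. \<bar>q i - 1 / real N\<bar>) = real (card B) * \<bar>sum q B / real (card B) - 1 / real N\<bar>"
    using fin below by (intro sum_abs_diff_same_sign) auto
  have tv_A: "(\<Sum>i\<in>A. \<bar>q i - 1 / real N\<bar>) = real (card A) * \<bar>sum q A / real (card A) - 1 / real N\<bar>"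
    using fin above by (intro sum_abs_diff_same_sign) (auto simp: A_def)
  have "(\<Sum>i=1..N. \<bar>q i - 1 / real N\<bar>)
      = (\<Sum>i\<in>B. \<bar>q i - 1 / real N\<bar>) + (\<Sum>i\<in>A. \<bar>q i - 1 / real N\<bar>)"
    by (rule split)
  also have "\<dots> = (\<Sum>i=1..N. \<bar>p i - 1 / real N\<bar>)"
    unfolding tv_A tv_B by (rule block_sums[of "\<lambda>x. \<bar>x - 1 / real N\<bar>", symmetric])
  finally show "tv_uniform N q = tv_uniform N p" by (simp add: tv_uniform_def)
  show "(\<Sum>i=1..N. xlogx (p i)) \<le> (\<Sum>i=1..N. xlogx (q i))"
    unfolding block_sums[of xlogx] split[of "\<lambda>i. xlogx (q i)"]
    using fin assms(2) q_nonneg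
    by (intro add_mono card_mult_xlogx_mean_le_sum) (auto simp: A_def)
qed

lemma simplex_split_at_uniform:
  assumes "N \<ge> 2" "q \<in> simplex N"
  obtains B where "B \<subseteq> {1..N}" "card B \<in> {1..N-1}"
    "\<forall>i\<in>B. q i \<le> 1 / real N" "\<forall>i\<in>{1..N} - B. 1 / real N \<le> q i"
proof (cases "\<exists>i\<in>{1..N}. q i < 1 / real N")
  case True
  define B where "B = {i\<in>{1..N}. q i < 1 / real N}"
  have B: "B \<noteq> {}" "B \<subseteq> {1..N}" using True by (auto simp: B_def)
  have "B \<noteq> {1..N}"
  proof
    assume "B = {1..N}"
    then have "\<forall>i\<in>{1..N}. q i < 1 / real N" unfolding B_def by blast
    then have "(\<Sum>i=1..N. q i) < (\<Sum>i=1..N. 1 / real N)"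
      using assms(1) by (intro sum_strict_mono) auto
    then show False using assms by (simp add: simplex_def)
  qed
  then have "card B < card {1..N}" using B(2) by (intro psubset_card_mono) auto
  moreover have "card B > 0" using B by (auto simp: card_gt_0_iff intro: finite_subset)
  ultimately show ?thesis by (intro that[of B]) (auto simp: B_def)
next
  case False
  then have "\<forall>i\<in>{1..N}. 0 \<le> q i - 1 / real N" by auto
  moreover have "(\<Sum>i=1..N. q i - 1 / real N) = 0"
    using assms by (simp add: simplex_def sum_subtractf)
  ultimately have "\<forall>i\<in>{1..N}. q i = 1 / real N"
    using sum_nonneg_eq_0_iff[of "{1..N}" "\<lambda>i. q i - 1 / real N"] by simp
  then show ?thesis using assms(1) by (intro that[of "{1}"]) simp_all
qed

lemma C_TV_le_two_block:
  assumes "N \<ge> 2" "q \<in> simplex N"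
  shows "\<exists>K\<in>{1..N-1}. \<exists>t\<in>{0..1}. C_TV N q \<le> C_TV N (two_block N K t)"
proof -
  obtain B where B: "B \<subseteq> {1..N}" "card B \<in> {1..N-1}"
    and below: "\<forall>i\<in>B. q i \<le> 1 / real N" and above: "\<forall>i\<in>{1..N} - B. 1 / real N \<le> q i"
    using simplex_split_at_uniform[OF assms] .
  define t where "t = sum q ({1..N} - B)"
  have q_nonneg: "\<forall>i\<in>{1..N}. 0 \<le> q i" and sum_q: "(\<Sum>i=1..N. q i) = 1"
    using assms(2) by (auto simp: simplex_def)
  have "t \<in> {0..1}"
    using q_nonneg sum_q sum_mono2[of "{1..N}" "{1..N} - B" q] sum_nonneg[of "{1..N} - B" q]
    by (auto simp: t_def)
  have "norm_entropy N q \<le> norm_entropy N (two_block N (card B) t)"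
    unfolding norm_entropy_def t_def
    using sum_xlogx_two_block_block_means[OF assms(2) B(1) below above] assms(1)
    by (intro mult_left_mono) auto
  then have "C_TV N q \<le> C_TV N (two_block N (card B) t)"
    unfolding C_TV_def t_def tv_uniform_two_block_block_means[OF assms(2) B(1) below above]
    by (intro mult_right_mono) auto
  with B(2) \<open>t \<in> {0..1}\<close> show ?thesis by blast
qed

lemma finite_family_attains_sup:
  fixes f :: "'i \<Rightarrow> 'a::topological_space \<Rightarrow> real"
  assumes "finite I" "I \<noteq> {}" "compact S" "S \<noteq> {}" "\<And>k. k \<in> I \<Longrightarrow> continuous_on S (f k)"
  shows "\<exists>k\<in>I. \<exists>x\<in>S. \<forall>j\<in>I. \<forall>y\<in>S. f j y \<le> f k x"
proof -
  have "compact (\<Union>k\<in>I. f k ` S)"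
    using assms by (intro compact_UN compact_continuous_image) auto
  moreover have "(\<Union>k\<in>I. f k ` S) \<noteq> {}" using assms by auto
  ultimately obtain m where m: "m \<in> (\<Union>k\<in>I. f k ` S)" "\<forall>z\<in>(\<Union>k\<in>I. f k ` S). z \<le> m"
    using compact_attains_sup by blast
  then obtain k x where "k \<in> I" "x \<in> S" "m = f k x" by blast
  with m(2) show ?thesis by blast
qed

theorem lemma4:
  fixes N :: nat
  assumes "N \<ge> 2"
  shows "\<exists>p\<in>simplex N. (\<forall>q\<in>simplex N. C_TV N q \<le> C_TV N p) \<and>
    (\<exists>\<sigma> K pmax. \<sigma> permutes {1..N} \<and> K \<in> {1..N-1} \<and> 0 \<le> pmax \<and> pmax \<le> 1 \<and>
       (\<forall>i\<in>{1..K}. p (\<sigma> i) = (1 - pmax) / real K) \<and>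
       (\<forall>i\<in>{K+1..N}. p (\<sigma> i) = pmax / real (N - K)))"
proof -
  have "\<exists>K\<in>{1..N-1}. \<exists>t\<in>{0..1}. \<forall>K'\<in>{1..N-1}. \<forall>t'\<in>{0..1}.
      C_TV N (two_block N K' t') \<le> C_TV N (two_block N K t)"
    by (rule finite_family_attains_sup[where f = "\<lambda>K t. C_TV N (two_block N K t)"])
      (use assms continuous_on_C_TV_two_block in auto)
  then obtain K0 t0 where K0: "K0 \<in> {1..N-1}" and t0: "t0 \<in> {0..1}"
    and max: "\<forall>K\<in>{1..N-1}. \<forall>t\<in>{0..1}. C_TV N (two_block N K t) \<le> C_TV N (two_block N K0 t0)"
    by blast
  define p where "p = two_block N K0 t0"
  show ?thesis
  proof (intro bexI[of _ p] conjI ballI)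
    show "p \<in> simplex N" using K0 t0 assms by (auto simp: p_def intro: two_block_in_simplex)
    show "C_TV N q \<le> C_TV N p" if q: "q \<in> simplex N" for q
    proof -
      obtain K t where "K \<in> {1..N-1}" "t \<in> {0..1}" "C_TV N q \<le> C_TV N (two_block N K t)"
        using C_TV_le_two_block[OF assms q] by blast
      with max show ?thesis unfolding p_def by (meson order_trans)
    qed
    show "\<exists>\<sigma> K pmax. \<sigma> permutes {1..N} \<and> K \<in> {1..N-1} \<and> 0 \<le> pmax \<and> pmax \<le> 1 \<and>
       (\<forall>i\<in>{1..K}. p (\<sigma> i) = (1 - pmax) / real K) \<and>
       (\<forall>i\<in>{K+1..N}. p (\<sigma> i) = pmax / real (N - K))"
      using K0 t0 by (intro exI[of _ id] exI[of _ K0] exI[of _ t0]) (simp add: p_def two_block_def)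
  qed
qed

end
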